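(* There exist functions $\psi,\phi\in L^\infty_{loc}(\mathbb{R})$ such that $S_{2+\varepsilon}(\psi,\phi)=\infty$ for every $\varepsilon>0$, while the commutator $[\phi,[\psi,H]]$ is bounded on $L^2(\mathbb{R})$, where $H$ is the Hilbert transform.
   Context: The Hilbert transform is $Hf(x)=\lim_{\varepsilon\to0}\int_{|x-y|>\varepsilon}\frac{f(y)}{x-y}\,dy$. $[A,B]=AB-BA$, and a function acts by pointwise multiplication; the commutator is defined on $L^\infty_c(\mathbb{R})$ and bounded on $L^2$ means $\|[\phi,[\psi,H]]f\|_{2}\le K\|f\|_2$ for all $f\in L^\infty_c$. For $r>0$, with $\langle g\rangle_I=\frac1{|I|}\int_Ig$ and supremum over all intervals $I$: $S_r(b_1,b_2)=\sup_I\big(\frac1{|I|}\int_I|b_1-\langle b_1\rangle_I|^r\big)^{1/r}\big(\frac1{|I|}\int_I|b_2-\langle b_2\rangle_I|^r\big)^{1/r}$. *)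

theory Defs
  imports "HOL-Analysis.Analysis"
begin

definition Linf_loc :: "(real \<Rightarrow> real) \<Rightarrow> bool" where
  "Linf_loc b \<longleftrightarrow> b \<in> borel_measurable lborel \<and>
     (\<forall>R. \<exists>C. AE x in lborel. \<bar>x\<bar> \<le> R \<longrightarrow> \<bar>b x\<bar> \<le> C)"

definition Linf_c :: "(real \<Rightarrow> real) \<Rightarrow> bool" where
  "Linf_c f \<longleftrightarrow> f \<in> borel_measurable lborel \<and>
     (\<exists>C. AE x in lborel. \<bar>f x\<bar> \<le> C) \<and>
     (\<exists>R. AE x in lborel. R < \<bar>x\<bar> \<longrightarrow> f x = 0)"

definition hilbert :: "(real \<Rightarrow> real) \<Rightarrow> real \<Rightarrow> real" where
  "hilbert f x = Lim (at_right 0)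
     (\<lambda>\<epsilon>. set_lebesgue_integral lborel {y. \<epsilon> < \<bar>x - y\<bar>} (\<lambda>y. f y / (x - y)))"

definition commut :: "(real \<Rightarrow> real) \<Rightarrow> ((real \<Rightarrow> real) \<Rightarrow> real \<Rightarrow> real)
    \<Rightarrow> (real \<Rightarrow> real) \<Rightarrow> real \<Rightarrow> real" where
  "commut b T f = (\<lambda>x. b x * T f x - T (\<lambda>y. b y * f y) x)"

definition avg :: "(real \<Rightarrow> real) \<Rightarrow> real \<Rightarrow> real \<Rightarrow> real" where
  "avg g a c = set_lebesgue_integral lborel {a..c} g / (c - a)"

definition osc :: "real \<Rightarrow> (real \<Rightarrow> real) \<Rightarrow> real \<Rightarrow> real \<Rightarrow> real" where
  "osc r b a c = (set_lebesgue_integral lborel {a..c}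
       (\<lambda>x. \<bar>b x - avg b a c\<bar> powr r) / (c - a)) powr (1 / r)"

definition S_r :: "real \<Rightarrow> (real \<Rightarrow> real) \<Rightarrow> (real \<Rightarrow> real) \<Rightarrow> ereal" where
  "S_r r b1 b2 = (SUP I \<in> {(a, c). a < c}. ereal (osc r b1 (fst I) (snd I) * osc r b2 (fst I) (snd I)))"

end

theory Submission
  imports Defs "HOL-Real_Asymp.Real_Asymp"
begin

text \<open>
  Take for \<phi> a train of spikes, of height h_n = exp(n^2/2 - n) on [n, n + m_n) with
  m_n = exp(-n^2), and \<psi>(x) = \<phi>(-x). The supports lie in [1,\<infinity>) and (-\<infinity>,-1], so \<phi>\<psi> = 0 and
  the double commutator reduces to -\<phi> H(\<psi> f) - \<psi> H(\<phi> f). Wherever the prefactor is nonzero the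
  kernel 1/(x - y) is at most 1/2, so Cauchy-Schwarz bounds the commutator on L^2 by a multiple of
  the L^2 norms of \<phi> and \<psi>, which are finite because h_n^2 m_n = exp(-2n).
  On the other hand, on [-(n+1), n+1] each of the two functions equals h_n on a set of measure m_n
  and vanishes on another one, so both r-oscillations there are at least (h_n/2)(m_n/(2n+2))^(1/r),
  and h_n m_n^(1/r) = exp((1/2 - 1/r) n^2 - n) tends to infinity when r > 2.
\<close>

lemma ennreal_abs_integral_le_nn_integral:
  fixes f :: "'a \<Rightarrow> real"
  shows "ennreal \<bar>integral\<^sup>L M f\<bar> \<le> (\<integral>\<^sup>+x. ennreal \<bar>f x\<bar> \<partial>M)"
  using integral_norm_bound_ennreal[of M f]
  by (cases "integrable M f") (simp_all add: not_integrable_integral_eq)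

lemma Linf_locI:
  assumes "b \<in> borel_measurable lborel" and "\<And>x R. \<bar>x\<bar> \<le> R \<Longrightarrow> \<bar>b x\<bar> \<le> C R"
  shows "Linf_loc b"
  using assms unfolding Linf_loc_def by (blast intro: AE_I2)

lemma nn_integral_lborel_reflect:
  fixes f :: "real \<Rightarrow> ennreal"
  assumes "f \<in> borel_measurable lborel"
  shows "(\<integral>\<^sup>+x. f (- x) \<partial>lborel) = (\<integral>\<^sup>+x. f x \<partial>lborel)"
  using nn_integral_real_affine[of f "-1" 0] assms by simp

section \<open>Double commutators with separated supports\<close>

lemma hilbert_eq_integral_if_separated:
  assumes "0 < d" and sep: "\<And>y. g y \<noteq> 0 \<Longrightarrow> d \<le> \<bar>x - y\<bar>"
  shows "hilbert g x = (\<integral>y. g y / (x - y) \<partial>lborel)"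
  unfolding hilbert_def
proof (rule tendsto_Lim)
  have "eventually (\<lambda>\<epsilon>. set_lebesgue_integral lborel {y. \<epsilon> < \<bar>x - y\<bar>} (\<lambda>y. g y / (x - y))
      = (\<integral>y. g y / (x - y) \<partial>lborel)) (at_right 0)"
    unfolding eventually_at_right_field
  proof (intro exI[of _ d] conjI allI impI)
    fix \<epsilon> :: real
    assume "\<epsilon> < d"
    then have "(\<lambda>y. indicator {y. \<epsilon> < \<bar>x - y\<bar>} y *\<^sub>R (g y / (x - y))) = (\<lambda>y. g y / (x - y))"
      using sep by (force simp: fun_eq_iff indicator_def)
    then show "set_lebesgue_integral lborel {y. \<epsilon> < \<bar>x - y\<bar>} (\<lambda>y. g y / (x - y))
        = (\<integral>y. g y / (x - y) \<partial>lborel)"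
      unfolding set_lebesgue_integral_def by simp
  qed (fact \<open>0 < d\<close>)
  then show "((\<lambda>\<epsilon>. set_lebesgue_integral lborel {y. \<epsilon> < \<bar>x - y\<bar>} (\<lambda>y. g y / (x - y)))
      \<longlongrightarrow> (\<integral>y. g y / (x - y) \<partial>lborel)) (at_right 0)"
    by (rule tendsto_eventually)
qed simp

lemma separated_kernel_integral_sq_le:
  fixes u f :: "real \<Rightarrow> real"
  assumes [measurable]: "u \<in> borel_measurable lborel" "f \<in> borel_measurable lborel"
    and "0 < d" and sep: "\<And>y. u y \<noteq> 0 \<Longrightarrow> d \<le> \<bar>x - y\<bar>"
  shows "ennreal ((\<integral>y. u y * f y / (x - y) \<partial>lborel)\<^sup>2)
    \<le> ennreal (1 / d\<^sup>2) * (\<integral>\<^sup>+y. ennreal ((u y)\<^sup>2) \<partial>lborel) * (\<integral>\<^sup>+y. ennreal ((f y)\<^sup>2) \<partial>lborel)"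
proof -
  have kernel: "(u y / (x - y))\<^sup>2 \<le> (u y)\<^sup>2 / d\<^sup>2" for y
  proof (cases "u y = 0")
    case False
    then have "d\<^sup>2 \<le> (x - y)\<^sup>2"
      using sep \<open>0 < d\<close> by (metis abs_le_square_iff abs_of_pos)
    moreover have "0 < d\<^sup>2"
      using \<open>0 < d\<close> by simp
    ultimately show ?thesis
      unfolding power_divide by (intro divide_left_mono mult_pos_pos) auto
  qed simp
  have "ennreal ((\<integral>y. u y * f y / (x - y) \<partial>lborel)\<^sup>2)
      = (ennreal \<bar>\<integral>y. u y / (x - y) * f y \<partial>lborel\<bar>)\<^sup>2"
    by (simp add: ennreal_power)
  also have "\<dots> \<le> (\<integral>\<^sup>+y. ennreal \<bar>u y / (x - y)\<bar> * ennreal \<bar>f y\<bar> \<partial>lborel)\<^sup>2"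
    using ennreal_abs_integral_le_nn_integral[of lborel "\<lambda>y. u y / (x - y) * f y"]
    by (intro power_mono_ennreal)
      (simp add: abs_mult ennreal_mult''[symmetric] del: ennreal_mult'')
  also have "\<dots> \<le> (\<integral>\<^sup>+y. (ennreal \<bar>u y / (x - y)\<bar>)\<^sup>2 \<partial>lborel) * (\<integral>\<^sup>+y. (ennreal \<bar>f y\<bar>)\<^sup>2 \<partial>lborel)"
    by (rule Cauchy_Schwarz_nn_integral) auto
  also have "(\<integral>\<^sup>+y. (ennreal \<bar>u y / (x - y)\<bar>)\<^sup>2 \<partial>lborel) \<le> (\<integral>\<^sup>+y. ennreal (1 / d\<^sup>2) * ennreal ((u y)\<^sup>2) \<partial>lborel)"
  proof (rule nn_integral_mono)
    fix y
    have "(ennreal \<bar>u y / (x - y)\<bar>)\<^sup>2 = ennreal ((u y / (x - y))\<^sup>2)"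
      by (simp add: ennreal_power power_divide)
    also have "\<dots> \<le> ennreal ((u y)\<^sup>2 / d\<^sup>2)"
      using kernel by (rule ennreal_leI)
    finally show "(ennreal \<bar>u y / (x - y)\<bar>)\<^sup>2 \<le> ennreal (1 / d\<^sup>2) * ennreal ((u y)\<^sup>2)"
      by (simp add: ennreal_mult[symmetric])
  qed
  also have "\<dots> = ennreal (1 / d\<^sup>2) * (\<integral>\<^sup>+y. ennreal ((u y)\<^sup>2) \<partial>lborel)"
    by (rule nn_integral_cmult) simp
  also have "(\<integral>\<^sup>+y. (ennreal \<bar>f y\<bar>)\<^sup>2 \<partial>lborel) = (\<integral>\<^sup>+y. ennreal ((f y)\<^sup>2) \<partial>lborel)"
    by (simp add: ennreal_power)
  finally show ?thesis
    by (simp add: mult_right_mono)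
qed

lemma commut_commut_hilbert_separated:
  assumes "0 < d" and sep: "\<And>x y. \<phi> x \<noteq> 0 \<Longrightarrow> \<psi> y \<noteq> 0 \<Longrightarrow> d \<le> \<bar>x - y\<bar>"
  shows "commut \<phi> (commut \<psi> hilbert) f x =
    - \<phi> x * (\<integral>y. \<psi> y * f y / (x - y) \<partial>lborel) - \<psi> x * (\<integral>y. \<phi> y * f y / (x - y) \<partial>lborel)"
proof -
  have disjoint: "\<phi> y * \<psi> y = 0" for y
    using sep[of y y] \<open>0 < d\<close> by fastforce
  then have "(\<lambda>y. \<psi> y * (\<phi> y * f y)) = (\<lambda>_. 0)"
    by (metis mult.assoc mult.commute mult_zero_left)
  then have "hilbert (\<lambda>y. \<psi> y * (\<phi> y * f y)) x = 0"
    using hilbert_eq_integral_if_separated[of 1 "\<lambda>_. 0" x] by simp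
  moreover have "\<phi> x \<noteq> 0 \<Longrightarrow> hilbert (\<lambda>y. \<psi> y * f y) x = (\<integral>y. \<psi> y * f y / (x - y) \<partial>lborel)"
    by (rule hilbert_eq_integral_if_separated[OF \<open>0 < d\<close>]) (auto intro: sep)
  moreover have "\<psi> x \<noteq> 0 \<Longrightarrow> hilbert (\<lambda>y. \<phi> y * f y) x = (\<integral>y. \<phi> y * f y / (x - y) \<partial>lborel)"
    by (rule hilbert_eq_integral_if_separated[OF \<open>0 < d\<close>]) (auto dest: sep simp: abs_minus_commute)
  ultimately show ?thesis
    using disjoint[of x] unfolding commut_def
    by (cases "\<phi> x = 0"; cases "\<psi> x = 0") (auto simp: algebra_simps)
qed

lemma commut_commut_hilbert_sq_le:
  fixes \<phi> \<psi> f :: "real \<Rightarrow> real"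
  assumes [measurable]: "\<phi> \<in> borel_measurable lborel" "\<psi> \<in> borel_measurable lborel"
      "f \<in> borel_measurable lborel"
    and "0 < d" and sep: "\<And>x y. \<phi> x \<noteq> 0 \<Longrightarrow> \<psi> y \<noteq> 0 \<Longrightarrow> d \<le> \<bar>x - y\<bar>"
  shows "ennreal ((commut \<phi> (commut \<psi> hilbert) f x)\<^sup>2)
    \<le> ennreal (1 / d\<^sup>2) * (ennreal ((\<phi> x)\<^sup>2) * (\<integral>\<^sup>+y. ennreal ((\<psi> y)\<^sup>2) \<partial>lborel)
      + ennreal ((\<psi> x)\<^sup>2) * (\<integral>\<^sup>+y. ennreal ((\<phi> y)\<^sup>2) \<partial>lborel)) * (\<integral>\<^sup>+y. ennreal ((f y)\<^sup>2) \<partial>lborel)"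
    (is "_ \<le> ?c * (ennreal ((\<phi> x)\<^sup>2) * ?Q + ennreal ((\<psi> x)\<^sup>2) * ?P) * ?N")
proof -
  define I where "I = (\<integral>y. \<psi> y * f y / (x - y) \<partial>lborel)"
  define J where "J = (\<integral>y. \<phi> y * f y / (x - y) \<partial>lborel)"
  have weighted: "ennreal (a\<^sup>2 * K\<^sup>2) \<le> ennreal (a\<^sup>2) * B"
    if "a \<noteq> 0 \<Longrightarrow> ennreal (K\<^sup>2) \<le> B" for a K :: real and B
    using that by (cases "a = 0") (auto simp: ennreal_mult intro: mult_left_mono)
  have "commut \<phi> (commut \<psi> hilbert) f x = - \<phi> x * I - \<psi> x * J"
    unfolding I_def J_def by (rule commut_commut_hilbert_separated[OF \<open>0 < d\<close> sep])
  moreover have "\<phi> x = 0 \<or> \<psi> x = 0"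
    using sep[of x x] \<open>0 < d\<close> by fastforce
  ultimately have "(commut \<phi> (commut \<psi> hilbert) f x)\<^sup>2 = (\<phi> x)\<^sup>2 * I\<^sup>2 + (\<psi> x)\<^sup>2 * J\<^sup>2"
    by (auto simp: power2_eq_square)
  then have "ennreal ((commut \<phi> (commut \<psi> hilbert) f x)\<^sup>2)
      = ennreal ((\<phi> x)\<^sup>2 * I\<^sup>2) + ennreal ((\<psi> x)\<^sup>2 * J\<^sup>2)"
    by (simp add: ennreal_plus)
  also have "\<dots> \<le> ennreal ((\<phi> x)\<^sup>2) * (?c * ?Q * ?N) + ennreal ((\<psi> x)\<^sup>2) * (?c * ?P * ?N)"
  proof (intro add_mono weighted)
    show "ennreal (I\<^sup>2) \<le> ?c * ?Q * ?N" if "\<phi> x \<noteq> 0"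
      unfolding I_def using that
      by (intro separated_kernel_integral_sq_le[OF _ _ \<open>0 < d\<close>]) (auto dest: sep)
    show "ennreal (J\<^sup>2) \<le> ?c * ?P * ?N" if "\<psi> x \<noteq> 0"
      unfolding J_def using that
      by (intro separated_kernel_integral_sq_le[OF _ _ \<open>0 < d\<close>]) (auto dest: sep simp: abs_minus_commute)
  qed
  also have "\<dots> = ?c * (ennreal ((\<phi> x)\<^sup>2) * ?Q + ennreal ((\<psi> x)\<^sup>2) * ?P) * ?N"
    by (simp add: algebra_simps)
  finally show ?thesis .
qed

lemma commut_commut_hilbert_nn_integral_le:
  fixes \<phi> \<psi> f :: "real \<Rightarrow> real"
  assumes [measurable]: "\<phi> \<in> borel_measurable lborel" "\<psi> \<in> borel_measurable lborel"
      "f \<in> borel_measurable lborel"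
    and "0 < d" and sep: "\<And>x y. \<phi> x \<noteq> 0 \<Longrightarrow> \<psi> y \<noteq> 0 \<Longrightarrow> d \<le> \<bar>x - y\<bar>"
  shows "(\<integral>\<^sup>+x. ennreal ((commut \<phi> (commut \<psi> hilbert) f x)\<^sup>2) \<partial>lborel)
    \<le> ennreal (2 / d\<^sup>2) * (\<integral>\<^sup>+y. ennreal ((\<phi> y)\<^sup>2) \<partial>lborel) * (\<integral>\<^sup>+y. ennreal ((\<psi> y)\<^sup>2) \<partial>lborel)
      * (\<integral>\<^sup>+y. ennreal ((f y)\<^sup>2) \<partial>lborel)"
    (is "_ \<le> _ * ?P * ?Q * ?N")
proof -
  have "(\<integral>\<^sup>+x. ennreal ((commut \<phi> (commut \<psi> hilbert) f x)\<^sup>2) \<partial>lborel)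
      \<le> (\<integral>\<^sup>+x. ennreal (1 / d\<^sup>2) * (ennreal ((\<phi> x)\<^sup>2) * ?Q + ennreal ((\<psi> x)\<^sup>2) * ?P) * ?N \<partial>lborel)"
    by (intro nn_integral_mono commut_commut_hilbert_sq_le[OF assms])
  also have "\<dots> = ennreal (1 / d\<^sup>2) * (?P * ?Q + ?Q * ?P) * ?N"
    by (simp add: nn_integral_multc nn_integral_cmult nn_integral_add)
  also have "\<dots> = ennreal (2 / d\<^sup>2) * ?P * ?Q * ?N"
  proof -
    have "ennreal (2 / d\<^sup>2) = ennreal (1 / d\<^sup>2) + ennreal (1 / d\<^sup>2)"
      by (simp flip: ennreal_plus)
    then show ?thesis
      by (simp add: algebra_simps)
  qed
  finally show ?thesis .
qed

lemma commut_commut_hilbert_bounded: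
  fixes \<phi> \<psi> :: "real \<Rightarrow> real"
  assumes [measurable]: "\<phi> \<in> borel_measurable lborel" "\<psi> \<in> borel_measurable lborel"
    and "(\<integral>\<^sup>+x. ennreal ((\<phi> x)\<^sup>2) \<partial>lborel) < \<infinity>" "(\<integral>\<^sup>+x. ennreal ((\<psi> x)\<^sup>2) \<partial>lborel) < \<infinity>"
    and "0 < d" and sep: "\<And>x y. \<phi> x \<noteq> 0 \<Longrightarrow> \<psi> y \<noteq> 0 \<Longrightarrow> d \<le> \<bar>x - y\<bar>"
  obtains K where "\<And>f. f \<in> borel_measurable lborel \<Longrightarrow>
    (\<integral>\<^sup>+x. ennreal ((commut \<phi> (commut \<psi> hilbert) f x)\<^sup>2) \<partial>lborel)
      \<le> ennreal (K\<^sup>2) * (\<integral>\<^sup>+x. ennreal ((f x)\<^sup>2) \<partial>lborel)"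
proof -
  define C where "C = ennreal (2 / d\<^sup>2) * (\<integral>\<^sup>+y. ennreal ((\<phi> y)\<^sup>2) \<partial>lborel)
    * (\<integral>\<^sup>+y. ennreal ((\<psi> y)\<^sup>2) \<partial>lborel)"
  have "C < \<infinity>"
    using assms(3,4) by (simp add: C_def ennreal_mult_less_top)
  then have "C = ennreal ((sqrt (enn2real C))\<^sup>2)"
    by simp
  then show ?thesis
    using that commut_commut_hilbert_nn_integral_le[OF assms(1,2) _ \<open>0 < d\<close> sep]
    unfolding C_def by metis
qed

section \<open>Mean oscillation\<close>

lemma half_dist_powr_le:
  fixes v w \<mu> :: real
  assumes "0 < r"
  shows "(\<bar>v - w\<bar> / 2) powr r \<le> \<bar>v - \<mu>\<bar> powr r + \<bar>w - \<mu>\<bar> powr r"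
proof (cases "\<bar>v - w\<bar> / 2 \<le> \<bar>v - \<mu>\<bar>")
  case True
  then have "(\<bar>v - w\<bar> / 2) powr r \<le> \<bar>v - \<mu>\<bar> powr r"
    using \<open>0 < r\<close> by (intro powr_mono2) auto
  then show ?thesis
    by (simp add: add_increasing2)
next
  case False
  moreover have "\<bar>v - w\<bar> \<le> \<bar>v - \<mu>\<bar> + \<bar>w - \<mu>\<bar>"
    by arith
  ultimately have "(\<bar>v - w\<bar> / 2) powr r \<le> \<bar>w - \<mu>\<bar> powr r"
    using \<open>0 < r\<close> by (intro powr_mono2) auto
  then show ?thesis
    by (simp add: add_increasing)
qed

lemma set_integrable_powr_dist_Icc:
  fixes b :: "real \<Rightarrow> real"
  assumes [measurable]: "b \<in> borel_measurable lborel"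
    and bounded: "\<And>x. x \<in> {a..c} \<Longrightarrow> \<bar>b x\<bar> \<le> B" and "0 < r"
  shows "set_integrable lborel {a..c} (\<lambda>x. \<bar>b x - \<mu>\<bar> powr r)"
  unfolding set_integrable_def
proof (rule integrableI_bounded_set[where A="{a..c}" and B="(B + \<bar>\<mu>\<bar>) powr r"])
  show "AE x in lborel. x \<in> {a..c} \<longrightarrow>
      norm (indicator {a..c} x *\<^sub>R \<bar>b x - \<mu>\<bar> powr r) \<le> (B + \<bar>\<mu>\<bar>) powr r"
  proof (intro AE_I2 impI)
    fix x
    assume "x \<in> {a..c}"
    then have "\<bar>b x - \<mu>\<bar> \<le> B + \<bar>\<mu>\<bar>"
      using bounded by fastforce
    then show "norm (indicator {a..c} x *\<^sub>R \<bar>b x - \<mu>\<bar> powr r) \<le> (B + \<bar>\<mu>\<bar>) powr r"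
      using \<open>x \<in> {a..c}\<close> \<open>0 < r\<close> by (simp add: powr_mono2)
  qed
  show "emeasure lborel {a..c} < \<infinity>"
    by (simp add: emeasure_lborel_Icc_eq)
qed simp_all

lemma set_integral_powr_ge_of_two_values:
  fixes b :: "real \<Rightarrow> real"
  assumes [measurable]: "b \<in> borel_measurable lborel"
    and bounded: "\<And>x. x \<in> {a..c} \<Longrightarrow> \<bar>b x\<bar> \<le> B"
    and "0 < r"
    and S: "S \<in> sets lborel" "S \<subseteq> {a..c}" "measure lborel S = m"
    and b_on_S: "\<And>x. x \<in> S \<Longrightarrow> b x = v"
    and Z: "Z \<in> sets lborel" "Z \<subseteq> {a..c}" "measure lborel Z = m"
    and b_on_Z: "\<And>x. x \<in> Z \<Longrightarrow> b x = w"
    and "S \<inter> Z = {}"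
  shows "(\<bar>v - w\<bar> / 2) powr r * m \<le> set_lebesgue_integral lborel {a..c} (\<lambda>x. \<bar>b x - \<mu>\<bar> powr r)"
proof -
  define g where "g x = \<bar>b x - \<mu>\<bar> powr r" for x
  define k where "k x = \<bar>v - \<mu>\<bar> powr r * indicator S x + \<bar>w - \<mu>\<bar> powr r * indicator Z x" for x
  have finite: "emeasure lborel S < \<infinity>" "emeasure lborel Z < \<infinity>"
    using S(2) Z(2) by (meson bounded_subset compact_Icc compact_imp_bounded emeasure_bounded_finite)+
  have "set_integrable lborel {a..c} g"
    unfolding g_def by (rule set_integrable_powr_dist_Icc[OF assms(1) bounded \<open>0 < r\<close>])
  moreover have "set_integrable lborel {a..c} k"
    using S Z finite unfolding set_integrable_def k_def
    by (intro integrable_mult_indicator) (auto simp: integrable_indicator_iff)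
  moreover have "k x \<le> g x" for x
  proof -
    consider "x \<in> S" "x \<notin> Z" | "x \<in> Z" "x \<notin> S" | "x \<notin> S" "x \<notin> Z"
      using \<open>S \<inter> Z = {}\<close> by blast
    then show ?thesis
      by cases (simp_all add: k_def g_def b_on_S b_on_Z)
  qed
  ultimately have k_le_g: "set_lebesgue_integral lborel {a..c} k \<le> set_lebesgue_integral lborel {a..c} g"
    by (intro set_integral_mono)
  have "m \<ge> 0"
    using S(3) by auto
  have "(\<bar>v - w\<bar> / 2) powr r * m \<le> (\<bar>v - \<mu>\<bar> powr r + \<bar>w - \<mu>\<bar> powr r) * m"
    using half_dist_powr_le[OF \<open>0 < r\<close>] \<open>m \<ge> 0\<close> by (rule mult_right_mono)
  also have "\<dots> = integral\<^sup>L lborel k"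
    using S Z finite unfolding k_def
    by (subst Bochner_Integration.integral_add) (auto simp: integrable_indicator_iff distrib_right)
  also have "\<dots> = set_lebesgue_integral lborel {a..c} k"
  proof -
    have "(\<lambda>x. indicator {a..c} x *\<^sub>R k x) = k"
      using S(2) Z(2) by (auto simp: fun_eq_iff k_def indicator_def)
    then show ?thesis
      unfolding set_lebesgue_integral_def by simp
  qed
  also note k_le_g
  finally show ?thesis
    unfolding g_def .
qed

lemma osc_ge_of_two_values:
  fixes b :: "real \<Rightarrow> real"
  assumes "b \<in> borel_measurable lborel"
    and "\<And>x. x \<in> {a..c} \<Longrightarrow> \<bar>b x\<bar> \<le> B"
    and "a < c" and "0 < r"
    and "S \<in> sets lborel" "S \<subseteq> {a..c}" "measure lborel S = m"
    and "\<And>x. x \<in> S \<Longrightarrow> b x = v"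
    and "Z \<in> sets lborel" "Z \<subseteq> {a..c}" "measure lborel Z = m"
    and "\<And>x. x \<in> Z \<Longrightarrow> b x = w"
    and "S \<inter> Z = {}"
  shows "\<bar>v - w\<bar> / 2 * (m / (c - a)) powr (1 / r) \<le> osc r b a c"
proof -
  define I where "I = set_lebesgue_integral lborel {a..c} (\<lambda>x. \<bar>b x - avg b a c\<bar> powr r)"
  have "m \<ge> 0"
    using \<open>measure lborel S = m\<close> by auto
  have "(\<bar>v - w\<bar> / 2) powr r * m \<le> I"
    unfolding I_def by (rule set_integral_powr_ge_of_two_values[OF assms(1,2,4-)])
  then have "(\<bar>v - w\<bar> / 2) powr r * (m / (c - a)) \<le> I / (c - a)"
    using divide_right_mono[of _ I "c - a"] \<open>a < c\<close> by simp
  then have "((\<bar>v - w\<bar> / 2) powr r * (m / (c - a))) powr (1 / r) \<le> (I / (c - a)) powr (1 / r)"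
    using \<open>m \<ge> 0\<close> \<open>a < c\<close> \<open>0 < r\<close> by (intro powr_mono2) simp_all
  also have "(I / (c - a)) powr (1 / r) = osc r b a c"
    unfolding osc_def I_def ..
  also have "((\<bar>v - w\<bar> / 2) powr r * (m / (c - a))) powr (1 / r) = \<bar>v - w\<bar> / 2 * (m / (c - a)) powr (1 / r)"
    using \<open>m \<ge> 0\<close> \<open>a < c\<close> \<open>0 < r\<close> by (subst powr_mult) (auto simp: powr_powr)
  finally show ?thesis .
qed

lemma S_r_eq_infinity_if_unbounded:
  assumes "\<And>B. \<exists>a c. a < c \<and> B \<le> osc r b1 a c * osc r b2 a c"
  shows "S_r r b1 b2 = \<infinity>"
  unfolding S_r_def
proof (rule SUP_PInfty)
  fix n :: nat
  obtain a c where "a < c" "real n \<le> osc r b1 a c * osc r b2 a c"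
    using assms by blast
  then show "\<exists>I\<in>{(a, c). a < c}. ereal (real n) \<le> ereal (osc r b1 (fst I) (snd I) * osc r b2 (fst I) (snd I))"
    by (intro bexI[of _ "(a, c)"]) auto
qed

section \<open>The spike functions\<close>

definition spike_height :: "nat \<Rightarrow> real" where
  "spike_height n = exp (real n ^ 2 / 2 - real n)"

definition spike_width :: "nat \<Rightarrow> real" where
  "spike_width n = exp (- (real n ^ 2))"

definition spikes :: "real \<Rightarrow> real" where
  "spikes x = (if 1 \<le> x \<and> x - real_of_int \<lfloor>x\<rfloor> < spike_width (nat \<lfloor>x\<rfloor>)
     then spike_height (nat \<lfloor>x\<rfloor>) else 0)"

lemma spike_width_pos: "0 < spike_width n"
  and spike_width_le_1: "spike_width n \<le> 1"
  unfolding spike_width_def by auto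

lemma spike_height_pos: "0 < spike_height n"
  unfolding spike_height_def by simp

lemma spikes_nonzero_imp_ge_1: "spikes x \<noteq> 0 \<Longrightarrow> 1 \<le> x"
  unfolding spikes_def by (auto split: if_splits)

lemma spikes_eq_spike_height:
  assumes "1 \<le> n" and "real n \<le> x" and "x < real n + spike_width n"
  shows "spikes x = spike_height n"
proof -
  have "\<lfloor>x\<rfloor> = int n"
    using assms spike_width_le_1[of n] by (simp add: floor_eq_iff)
  then show ?thesis
    using assms unfolding spikes_def by auto
qed

lemma abs_spikes_le:
  assumes "\<bar>x\<bar> \<le> R"
  shows "\<bar>spikes x\<bar> \<le> exp (R\<^sup>2 / 2)"
proof (cases "spikes x = 0")
  case False
  define n where "n = nat \<lfloor>x\<rfloor>"
  have "1 \<le> x"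
    using False by (rule spikes_nonzero_imp_ge_1)
  then have "spikes x = spike_height n"
    using False unfolding spikes_def n_def by (auto split: if_splits)
  moreover have "0 \<le> real n" "real n \<le> R"
    using \<open>1 \<le> x\<close> assms unfolding n_def by linarith+
  moreover have "spike_height n \<le> exp (real n ^ 2 / 2)"
    unfolding spike_height_def by simp
  moreover have "real n ^ 2 \<le> R\<^sup>2"
    using \<open>0 \<le> real n\<close> \<open>real n \<le> R\<close> by (intro power_mono) auto
  ultimately show ?thesis
    using spike_height_pos[of n] by (simp add: order_trans)
qed simp

lemma spikes_borel_measurable [measurable]: "spikes \<in> borel_measurable lborel"
proof -
  have "(\<lambda>x. (\<lambda>i::int. \<lambda>x. if 1 \<le> x \<and> x - real_of_int i < spike_width (nat i)
      then spike_height (nat i) else 0) \<lfloor>x\<rfloor> x) \<in> borel_measurable lborel"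
    by (rule measurable_compose_countable) auto
  then show ?thesis
    unfolding spikes_def[abs_def] by simp
qed

lemma spikes_sq_le_suminf:
  "ennreal ((spikes x)\<^sup>2)
    \<le> (\<Sum>n. ennreal ((spike_height n)\<^sup>2) * indicator {real n..<real n + spike_width n} x)"
proof (cases "spikes x = 0")
  case False
  define n where "n = nat \<lfloor>x\<rfloor>"
  have "1 \<le> x"
    using False by (rule spikes_nonzero_imp_ge_1)
  then have "x \<in> {real n..<real n + spike_width n}" and "spikes x = spike_height n"
    using False unfolding spikes_def n_def by (auto split: if_splits)
  then have "ennreal ((spikes x)\<^sup>2)
      = (\<Sum>i\<in>{n}. ennreal ((spike_height i)\<^sup>2) * indicator {real i..<real i + spike_width i} x)"
    by simp
  also have "\<dots> \<le> (\<Sum>i. ennreal ((spike_height i)\<^sup>2) * indicator {real i..<real i + spike_width i} x)"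
    by (rule sum_le_suminf) auto
  finally show ?thesis .
qed simp

lemma spikes_square_integrable: "(\<integral>\<^sup>+x. ennreal ((spikes x)\<^sup>2) \<partial>lborel) < \<infinity>"
proof -
  have "(\<integral>\<^sup>+x. ennreal ((spikes x)\<^sup>2) \<partial>lborel)
      \<le> (\<integral>\<^sup>+x. (\<Sum>n. ennreal ((spike_height n)\<^sup>2) * indicator {real n..<real n + spike_width n} x) \<partial>lborel)"
    by (intro nn_integral_mono spikes_sq_le_suminf)
  also have "\<dots> = (\<Sum>n. \<integral>\<^sup>+x. ennreal ((spike_height n)\<^sup>2) * indicator {real n..<real n + spike_width n} x \<partial>lborel)"
    by (rule nn_integral_suminf) auto
  also have "\<dots> = (\<Sum>n. ennreal (exp (-2) ^ n))"
  proof (rule suminf_cong)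
    fix n
    have "(spike_height n)\<^sup>2 * spike_width n = exp (-2) ^ n"
      unfolding spike_height_def spike_width_def
      by (simp add: power2_eq_square algebra_simps flip: exp_add exp_of_nat_mult)
    then show "(\<integral>\<^sup>+x. ennreal ((spike_height n)\<^sup>2) * indicator {real n..<real n + spike_width n} x \<partial>lborel)
        = ennreal (exp (-2) ^ n)"
      using spike_width_pos[of n] by (simp add: nn_integral_cmult_indicator flip: ennreal_mult)
  qed
  also have "\<dots> = ennreal (\<Sum>n. exp (-2) ^ n)"
    by (rule suminf_ennreal2) (auto simp: summable_geometric)
  finally show ?thesis
    by (simp add: le_less_trans)
qed

lemma spikes_reflect_square_integrable: "(\<integral>\<^sup>+x. ennreal ((spikes (- x))\<^sup>2) \<partial>lborel) < \<infinity>"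
  using spikes_square_integrable by (subst nn_integral_lborel_reflect) simp_all

lemma spikes_reflect_separated: "spikes x \<noteq> 0 \<Longrightarrow> spikes (- y) \<noteq> 0 \<Longrightarrow> 2 \<le> \<bar>x - y\<bar>"
  using spikes_nonzero_imp_ge_1[of x] spikes_nonzero_imp_ge_1[of "- y"] by simp

lemma osc_spikes_ge:
  assumes "1 \<le> n" and "0 < r"
  shows "spike_height n / 2 * (spike_width n / (2 * real n + 2)) powr (1 / r)
      \<le> osc r spikes (- (real n + 1)) (real n + 1)"
    and "spike_height n / 2 * (spike_width n / (2 * real n + 2)) powr (1 / r)
      \<le> osc r (\<lambda>x. spikes (- x)) (- (real n + 1)) (real n + 1)"
proof -
  define right where "right = {real n..<real n + spike_width n}"
  define left where "left = {- (real n + spike_width n)<..- real n}"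
  have bounded: "\<bar>spikes x\<bar> \<le> exp ((real n + 1)\<^sup>2 / 2)" "\<bar>spikes (- x)\<bar> \<le> exp ((real n + 1)\<^sup>2 / 2)"
    if "x \<in> {- (real n + 1)..real n + 1}" for x
    using that abs_spikes_le[of x "real n + 1"] abs_spikes_le[of "- x" "real n + 1"] by auto
  have intervals: "right \<subseteq> {- (real n + 1)..real n + 1}" "left \<subseteq> {- (real n + 1)..real n + 1}"
      "measure lborel right = spike_width n" "measure lborel left = spike_width n"
      "right \<inter> left = {}" "left \<inter> right = {}"
    using spike_width_pos[of n] spike_width_le_1[of n] \<open>1 \<le> n\<close> unfolding right_def left_def by auto
  have on_right: "x \<in> right \<Longrightarrow> spikes x = spike_height n" for x
    using \<open>1 \<le> n\<close> unfolding right_def by (auto intro: spikes_eq_spike_height)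
  have on_left: "x \<in> left \<Longrightarrow> spikes x = 0" for x
    using \<open>1 \<le> n\<close> spikes_nonzero_imp_ge_1[of x] unfolding left_def by force
  have "\<bar>spike_height n - 0\<bar> / 2 * (spike_width n / (real n + 1 - - (real n + 1))) powr (1 / r)
      \<le> osc r spikes (- (real n + 1)) (real n + 1)"
  proof (rule osc_ge_of_two_values[where S = right and Z = left])
    show "spikes \<in> borel_measurable lborel"
      by measurable
  qed (use intervals on_right on_left bounded(1) \<open>0 < r\<close> in \<open>simp_all add: right_def left_def\<close>)
  then show "spike_height n / 2 * (spike_width n / (2 * real n + 2)) powr (1 / r)
      \<le> osc r spikes (- (real n + 1)) (real n + 1)"
    using spike_height_pos[of n] by (simp add: algebra_simps)
  have "\<bar>spike_height n - 0\<bar> / 2 * (spike_width n / (real n + 1 - - (real n + 1))) powr (1 / r)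
      \<le> osc r (\<lambda>x. spikes (- x)) (- (real n + 1)) (real n + 1)"
  proof (rule osc_ge_of_two_values[where S = left and Z = right])
    show "(\<lambda>x. spikes (- x)) \<in> borel_measurable lborel"
      by measurable
  qed (use intervals on_right on_left bounded(2) \<open>0 < r\<close> in \<open>simp_all add: right_def left_def\<close>)
  then show "spike_height n / 2 * (spike_width n / (2 * real n + 2)) powr (1 / r)
      \<le> osc r (\<lambda>x. spikes (- x)) (- (real n + 1)) (real n + 1)"
    using spike_height_pos[of n] by (simp add: algebra_simps)
qed

lemma spikes_osc_bound_tendsto:
  assumes "2 < r"
  shows "filterlim (\<lambda>n. spike_height n / 2 * (spike_width n / (2 * real n + 2)) powr (1 / r))
    at_top sequentially"
  unfolding spike_height_def spike_width_def using assms by real_asymp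

lemma S_r_spikes_eq_infinity:
  assumes "2 < r"
  shows "S_r r (\<lambda>x. spikes (- x)) spikes = \<infinity>"
proof (rule S_r_eq_infinity_if_unbounded)
  fix B :: real
  define Y where "Y n = spike_height n / 2 * (spike_width n / (2 * real n + 2)) powr (1 / r)" for n
  have large: "eventually (\<lambda>n. max B 1 \<le> Y n) sequentially"
    using spikes_osc_bound_tendsto[OF assms] unfolding Y_def filterlim_at_top by (rule spec)
  obtain n where "max B 1 \<le> Y n" and "1 \<le> n"
    using eventually_conj[OF large eventually_ge_at_top[of 1]] unfolding eventually_sequentially by auto
  moreover have "Y n * 1 \<le> Y n * Y n"
    using \<open>max B 1 \<le> Y n\<close> by (intro mult_left_mono) auto
  ultimately have "B \<le> Y n * Y n"
    by linarith
  also have "\<dots> \<le> osc r (\<lambda>x. spikes (- x)) (- (real n + 1)) (real n + 1) * osc r spikes (- (real n + 1)) (real n + 1)"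
    using osc_spikes_ge[OF \<open>1 \<le> n\<close>, of r] \<open>max B 1 \<le> Y n\<close> assms unfolding Y_def
    by (intro mult_mono') auto
  finally show "\<exists>a c. a < c \<and> B \<le> osc r (\<lambda>x. spikes (- x)) a c * osc r spikes a c"
    by (intro exI[of _ "- (real n + 1)"] exI[of _ "real n + 1"]) simp
qed

theorem theorem4p3:
  shows "\<exists>\<psi> \<phi>. Linf_loc \<psi> \<and> Linf_loc \<phi> \<and>
    (\<forall>\<epsilon>>0. S_r (2 + \<epsilon>) \<psi> \<phi> = \<infinity>) \<and>
    (\<exists>K. \<forall>f. Linf_c f \<longrightarrow>
       (\<integral>\<^sup>+ x. ennreal ((commut \<phi> (commut \<psi> hilbert) f x)\<^sup>2) \<partial>lborel)
         \<le> ennreal (K\<^sup>2) * (\<integral>\<^sup>+ x. ennreal ((f x)\<^sup>2) \<partial>lborel))"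
proof (rule exI[of _ "\<lambda>x. spikes (- x)"], rule exI[of _ spikes], intro conjI allI impI)
  have reflect_measurable: "(\<lambda>x. spikes (- x)) \<in> borel_measurable lborel"
    by measurable
  show "Linf_loc spikes"
    by (rule Linf_locI[OF spikes_borel_measurable abs_spikes_le])
  show "Linf_loc (\<lambda>x. spikes (- x))"
    by (rule Linf_locI[OF reflect_measurable abs_spikes_le]) simp
  show "S_r (2 + \<epsilon>) (\<lambda>x. spikes (- x)) spikes = \<infinity>" if "0 < \<epsilon>" for \<epsilon> :: real
    using that by (intro S_r_spikes_eq_infinity) simp
  obtain K where "\<And>f. f \<in> borel_measurable lborel \<Longrightarrow>
      (\<integral>\<^sup>+x. ennreal ((commut spikes (commut (\<lambda>x. spikes (- x)) hilbert) f x)\<^sup>2) \<partial>lborel)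
        \<le> ennreal (K\<^sup>2) * (\<integral>\<^sup>+x. ennreal ((f x)\<^sup>2) \<partial>lborel)"
    using commut_commut_hilbert_bounded[OF spikes_borel_measurable reflect_measurable
        spikes_square_integrable spikes_reflect_square_integrable _ spikes_reflect_separated]
    by auto
  then show "\<exists>K. \<forall>f. Linf_c f \<longrightarrow>
      (\<integral>\<^sup>+x. ennreal ((commut spikes (commut (\<lambda>x. spikes (- x)) hilbert) f x)\<^sup>2) \<partial>lborel)
        \<le> ennreal (K\<^sup>2) * (\<integral>\<^sup>+x. ennreal ((f x)\<^sup>2) \<partial>lborel)"
    unfolding Linf_c_def by blast
qed

end
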